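(* Let $V$ be a vertex algebra over $\mathbb{F}$ and let $W$ be a $(V,\mathcal{B})$-module. Set $W^{\mathcal{D}}=\{w\in W\mid \mathcal{D}^{(n)}w=0\text{ for all } n\ge1\}$. If $f:V\to W$ is a $V$-module homomorphism, then $f$ is a $(V,\mathcal{B})$-module homomorphism (i.e. also a $\mathcal{B}$-module homomorphism) if and only if $f(\mathbf{1})\in W^{\mathcal{D}}$. Furthermore, the map $\phi:\mathrm{Hom}_{(V,\mathcal{B})}(V,W)\to W^{\mathcal{D}}$, $\phi(f)=f(\mathbf{1})$, is a linear isomorphism.
   Context: $\mathbb{F}$ is an algebraically closed field of odd prime characteristic $p$; vertex algebras and their modules over $\mathbb{F}$ are defined by the usual axioms with the Jacobi identity. $\mathcal{B}$ is the bialgebra with basis $\{\mathcal{D}^{(n)}\mid n\in\mathbb{N}\}$, $\mathcal{D}^{(0)}=1$, $\mathcal{D}^{(m)}\mathcal{D}^{(n)}=\binom{m+n}{n}\mathcal{D}^{(m+n)}$, $\Delta(\mathcal{D}^{(n)})=\sum_{i=0}^n\mathcal{D}^{(n-i)}\otimes\mathcal{D}^{(i)}$, $\varepsilon(\mathcal{D}^{(n)})=\delta_{n,0}$; write $e^{x\mathcal{D}}=\sum_{n\ge0}x^n\mathcal{D}^{(n)}$. Every vertex algebra $V$ is a $\mathcal{B}$-module via $\mathcal{D}^{(n)}v=v_{-n-1}\mathbf{1}$. A $(V,\mathcal{B})$-module is a $V$-module $(W,Y_W)$ that is also a $\mathcal{B}$-module with $e^{x\mathcal{D}}Y_W(v,z)e^{-x\mathcal{D}}=Y_W(e^{x\mathcal{D}}v,z)$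 for all $v\in V$. $\mathrm{Hom}_{(V,\mathcal{B})}(V,W)$ is the space of maps that are both $V$-module and $\mathcal{B}$-module homomorphisms. *)

theory Defs
  imports "HOL-Computational_Algebra.Polynomial" "HOL-Library.Groups_Big_Fun"
begin

(* Binomial coefficient binom(m,i) for an integer top entry m and i :: nat,
   i.e. m(m-1)...(m-i+1)/i!, written integrally (valid in any characteristic). *)
definition int_binom :: "int \<Rightarrow> nat \<Rightarrow> int" where
  "int_binom m i = (if 0 \<le> m then int (nat m choose i)
                    else (-1) ^ i * int ((nat (-m) + i - 1) choose i))"

(* Jacobi identity in component form (coefficient of z0^(-l-1) z1^(-m-1) z2^(-n-1)).
   YV u n v = u_n v  (vertex operators of V),  YW v n w = v_n w (action on W).
   All sums have finite support by truncation; Sum_any sums over the support. *)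
definition jacobi_id ::
  "('k::field \<Rightarrow> 'w::ab_group_add \<Rightarrow> 'w) \<Rightarrow> ('v \<Rightarrow> int \<Rightarrow> 'v \<Rightarrow> 'v) \<Rightarrow> ('v \<Rightarrow> int \<Rightarrow> 'w \<Rightarrow> 'w) \<Rightarrow> bool" where
  "jacobi_id sW YV YW \<longleftrightarrow>
     (\<forall>u v w l m n.
        Sum_any (\<lambda>i::nat. sW (of_int (int_binom m i)) (YW (YV u (l + int i) v) (m + n - int i) w))
      = Sum_any (\<lambda>i::nat. sW (of_int ((-1) ^ i * int_binom l i))
            (YW u (l + m - int i) (YW v (n + int i) w)
             - sW ((-1) powi l) (YW v (l + n - int i) (YW u (m + int i) w)))))"

definition vertex_algebra ::
  "('k::field \<Rightarrow> 'v::ab_group_add \<Rightarrow> 'v) \<Rightarrow> ('v \<Rightarrow> int \<Rightarrow> 'v \<Rightarrow> 'v) \<Rightarrow> 'v \<Rightarrow> bool" where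
  "vertex_algebra sV Y vac \<longleftrightarrow>
     vector_space sV
   \<and> (\<forall>u n. Vector_Spaces.linear sV sV (Y u n))
   \<and> (\<forall>v n. Vector_Spaces.linear sV sV (\<lambda>u. Y u n v))
   \<and> (\<forall>u v. \<exists>N. \<forall>n\<ge>N. Y u n v = 0)
   \<and> (\<forall>v n. Y vac n v = (if n = -1 then v else 0))
   \<and> (\<forall>v. Y v (-1) vac = v)
   \<and> (\<forall>v n. 0 \<le> n \<longrightarrow> Y v n vac = 0)
   \<and> jacobi_id sV Y Y"

definition va_module ::
  "('k::field \<Rightarrow> 'v::ab_group_add \<Rightarrow> 'v) \<Rightarrow> ('v \<Rightarrow> int \<Rightarrow> 'v \<Rightarrow> 'v) \<Rightarrow> 'v
   \<Rightarrow> ('k \<Rightarrow> 'w::ab_group_add \<Rightarrow> 'w) \<Rightarrow> ('v \<Rightarrow> int \<Rightarrow> 'w \<Rightarrow> 'w) \<Rightarrow> bool" where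
  "va_module sV Y vac sW YW \<longleftrightarrow>
     vector_space sW
   \<and> (\<forall>v n. Vector_Spaces.linear sW sW (YW v n))
   \<and> (\<forall>w n. Vector_Spaces.linear sV sW (\<lambda>v. YW v n w))
   \<and> (\<forall>v w. \<exists>N. \<forall>n\<ge>N. YW v n w = 0)
   \<and> (\<forall>w n. YW vac n w = (if n = -1 then w else 0))
   \<and> jacobi_id sW Y YW"

(* module over the bialgebra B with basis D^(n):  D n = action of D^(n) *)
definition B_module :: "('k::field \<Rightarrow> 'w::ab_group_add \<Rightarrow> 'w) \<Rightarrow> (nat \<Rightarrow> 'w \<Rightarrow> 'w) \<Rightarrow> bool" where
  "B_module sW D \<longleftrightarrow>
     (\<forall>n. Vector_Spaces.linear sW sW (D n))
   \<and> (\<forall>w. D 0 w = w)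
   \<and> (\<forall>m n w. D m (D n w) = sW (of_nat ((m + n) choose n)) (D (m + n) w))"

definition DV :: "('v \<Rightarrow> int \<Rightarrow> 'v \<Rightarrow> 'v) \<Rightarrow> 'v \<Rightarrow> nat \<Rightarrow> 'v \<Rightarrow> 'v" where
  "DV Y vac n v = Y v (- int n - 1) vac"

(* (V,B)-module: e^{xD} Y_W(v,z) e^{-xD} = Y_W(e^{xD} v, z), compared coefficientwise
   in x^k and z^{-n-1}, where e^{-xD} = sum_b (-x)^b D^(b). *)
definition VB_module ::
  "('k::field \<Rightarrow> 'v::ab_group_add \<Rightarrow> 'v) \<Rightarrow> ('v \<Rightarrow> int \<Rightarrow> 'v \<Rightarrow> 'v) \<Rightarrow> 'v
   \<Rightarrow> ('k \<Rightarrow> 'w::ab_group_add \<Rightarrow> 'w) \<Rightarrow> ('v \<Rightarrow> int \<Rightarrow> 'w \<Rightarrow> 'w) \<Rightarrow> (nat \<Rightarrow> 'w \<Rightarrow> 'w) \<Rightarrow> bool" where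
  "VB_module sV Y vac sW YW D \<longleftrightarrow>
     va_module sV Y vac sW YW
   \<and> B_module sW D
   \<and> (\<forall>v n k w. (\<Sum>a\<le>k. D a (YW v n (sW ((-1) ^ (k - a)) (D (k - a) w))))
                 = YW (DV Y vac k v) n w)"

definition V_hom ::
  "('k::field \<Rightarrow> 'v::ab_group_add \<Rightarrow> 'v) \<Rightarrow> ('v \<Rightarrow> int \<Rightarrow> 'v \<Rightarrow> 'v)
   \<Rightarrow> ('k \<Rightarrow> 'w::ab_group_add \<Rightarrow> 'w) \<Rightarrow> ('v \<Rightarrow> int \<Rightarrow> 'w \<Rightarrow> 'w) \<Rightarrow> ('v \<Rightarrow> 'w) \<Rightarrow> bool" where
  "V_hom sV Y sW YW f \<longleftrightarrow> Vector_Spaces.linear sV sW f \<and> (\<forall>u n v. f (Y u n v) = YW u n (f v))"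

definition B_hom ::
  "('v \<Rightarrow> int \<Rightarrow> 'v \<Rightarrow> 'v) \<Rightarrow> 'v \<Rightarrow> (nat \<Rightarrow> 'w \<Rightarrow> 'w) \<Rightarrow> ('v \<Rightarrow> 'w) \<Rightarrow> bool" where
  "B_hom Y vac D f \<longleftrightarrow> (\<forall>n v. f (DV Y vac n v) = D n (f v))"

definition VB_Hom ::
  "('k::field \<Rightarrow> 'v::ab_group_add \<Rightarrow> 'v) \<Rightarrow> ('v \<Rightarrow> int \<Rightarrow> 'v \<Rightarrow> 'v) \<Rightarrow> 'v
   \<Rightarrow> ('k \<Rightarrow> 'w::ab_group_add \<Rightarrow> 'w) \<Rightarrow> ('v \<Rightarrow> int \<Rightarrow> 'w \<Rightarrow> 'w) \<Rightarrow> (nat \<Rightarrow> 'w \<Rightarrow> 'w) \<Rightarrow> ('v \<Rightarrow> 'w) set" where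
  "VB_Hom sV Y vac sW YW D = {f. V_hom sV Y sW YW f \<and> B_hom Y vac D f}"

definition W_D :: "(nat \<Rightarrow> 'w::zero \<Rightarrow> 'w) \<Rightarrow> 'w set" where
  "W_D D = {w. \<forall>n\<ge>1. D n w = 0}"

end

theory Submission
  imports Defs
begin

text \<open>
  For \<open>w \<in> W\<^sup>D\<close> the \<open>(V,B)\<close>-compatibility collapses to
  \<open>D\<^sup>(\<^sup>k\<^sup>) (v\<^sub>m w) = (D\<^sup>(\<^sup>k\<^sup>) v)\<^sub>m w\<close>, while the iterate formula gives
  \<open>(D\<^sup>(\<^sup>k\<^sup>) u)\<^sub>j\<^sub>+\<^sub>k w = (-1)\<^sup>k binom(k + j, j) u\<^sub>j w\<close>. Choosing \<open>k\<close> beyond the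
  truncation bound of \<open>u\<^sub>n w\<close> and with \<open>binom(k + j, j) \<noteq> 0\<close> in the field (a large power
  of a positive characteristic works, by the freshman's dream) shows that \<open>w\<close> is
  vacuum-like. For vacuum-like \<open>w\<close> the map \<open>v \<mapsto> v\<^sub>-\<^sub>1 w\<close> is a \<open>V\<close>-module
  homomorphism, and every \<open>V\<close>-module homomorphism is of this form with \<open>w = f \<one>\<close>,
  since \<open>f v = f (v\<^sub>-\<^sub>1 \<one>) = v\<^sub>-\<^sub>1 f \<one>\<close>. The argument works over any field.
\<close>

definition vacuum_like :: "('v \<Rightarrow> int \<Rightarrow> 'w::zero \<Rightarrow> 'w) \<Rightarrow> 'w \<Rightarrow> bool" where
  "vacuum_like YW w \<longleftrightarrow> (\<forall>u n. 0 \<le> n \<longrightarrow> YW u n w = 0)"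

lemma Sum_any_eq_single: "(\<And>i. i \<noteq> a \<Longrightarrow> g i = 0) \<Longrightarrow> Sum_any g = g a"
  by (subst Sum_any.expand_superset[of "{a}"]) auto

lemma int_binom_0_right [simp]: "int_binom l 0 = 1"
  by (simp add: int_binom_def)

lemma int_binom_0_left: "int_binom 0 i = (if i = 0 then 1 else 0)"
  by (cases i) (auto simp: int_binom_def)

lemma int_binom_minus_Suc: "int_binom (- int k - 1) j = (-1) ^ j * int ((k + j) choose j)"
  by (simp add: int_binom_def nat_add_distrib)

lemma of_nat_choose_prime_power_add_neq_0:
  assumes p: "prime CHAR('k::field)" and j: "j < CHAR('k) ^ e"
  shows "(of_nat ((CHAR('k) ^ e + j) choose j) :: 'k) \<noteq> 0"
proof -
  define q where "q = CHAR('k) ^ e"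
  have coeff_power: "coeff ([:1, 1::'k:] ^ n) i = of_nat (n choose i)" if "i \<le> n" for n i
    using coeff_linear_poly_power[OF that, of 1 1] by simp
  have "[:1, 1::'k:] ^ q = (1 + monom 1 1) ^ q"
    by (simp add: monom_Suc one_pCons)
  also have "\<dots> = 1 + monom 1 q"
    by (subst freshmans_dream'[where n = e]) (use p in \<open>simp_all add: q_def monom_power\<close>)
  finally have "coeff ([:1, 1::'k:] ^ (q + j)) j
      = coeff ([:1, 1:] ^ j) j + coeff (monom 1 q * [:1, 1:] ^ j) j"
    by (simp add: power_add algebra_simps)
  also have "\<dots> = 1"
    using j by (simp add: q_def coeff_power coeff_monom_mult)
  finally show ?thesis
    using coeff_power[of j "q + j"] by (simp add: q_def)
qed

lemma ex_ge_of_nat_choose_add_neq_0: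
  "\<exists>q\<ge>N. (of_nat ((q + j) choose j) :: 'k::field) \<noteq> 0"
proof (cases "CHAR('k) = 0")
  case True
  then have "(of_nat ((N + j) choose j) :: 'k) \<noteq> 0"
    by (simp add: of_nat_eq_0_iff_char_dvd)
  then show ?thesis by blast
next
  case False
  then have p: "prime CHAR('k)"
    by (simp add: prime_CHAR_semidom)
  have "N + j < 2 ^ (N + j)"
    by (rule less_exp)
  also have "\<dots> \<le> CHAR('k) ^ (N + j)"
    using prime_ge_2_nat[OF p] by (rule power_mono) simp
  finally have "N \<le> CHAR('k) ^ (N + j)" and "j < CHAR('k) ^ (N + j)"
    by simp_all
  then show ?thesis
    using of_nat_choose_prime_power_add_neq_0[OF p] by blast
qed

lemma V_hom_eq_action_minus_one:
  assumes "vertex_algebra sV Y vac" and "V_hom sV Y sW YW f"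
  shows "f v = YW v (-1) (f vac)"
proof -
  have "f v = f (Y v (-1) vac)"
    using assms(1) by (simp add: vertex_algebra_def)
  then show ?thesis
    using assms(2) by (simp add: V_hom_def)
qed

context
  fixes sV :: "'k::field \<Rightarrow> 'v::ab_group_add \<Rightarrow> 'v" and Y :: "'v \<Rightarrow> int \<Rightarrow> 'v \<Rightarrow> 'v"
    and vac :: 'v and sW :: "'k \<Rightarrow> 'w::ab_group_add \<Rightarrow> 'w" and YW :: "'v \<Rightarrow> int \<Rightarrow> 'w \<Rightarrow> 'w"
  assumes module: "va_module sV Y vac sW YW"
begin

interpretation W: vector_space sW
  using module by (simp add: va_module_def)

interpretation WW: vector_space_pair sW sW ..

lemma va_module_action_0 [simp]: "YW v n 0 = 0"
  using module by (simp add: va_module_def WW.linear_0)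

lemma va_module_vacuum_action: "YW vac n w = (if n = -1 then w else 0)"
  using module by (simp add: va_module_def)

lemma va_module_iterate:
  "YW (Y u l v) n w = Sum_any (\<lambda>i::nat. sW (of_int ((-1) ^ i * int_binom l i))
      (YW u (l - int i) (YW v (n + int i) w)
       - sW ((-1) powi l) (YW v (l + n - int i) (YW u (int i) w))))"
proof -
  have "YW (Y u l v) n w
      = Sum_any (\<lambda>i::nat. sW (of_int (int_binom 0 i)) (YW (Y u (l + int i) v) (0 + n - int i) w))"
    by (subst Sum_any_eq_single[of 0]) (simp_all add: int_binom_0_left)
  also have "\<dots> = Sum_any (\<lambda>i::nat. sW (of_int ((-1) ^ i * int_binom l i))
      (YW u (l + 0 - int i) (YW v (n + int i) w)
       - sW ((-1) powi l) (YW v (l + n - int i) (YW u (0 + int i) w))))"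
    using module unfolding va_module_def jacobi_id_def by blast
  finally show ?thesis by simp
qed

lemma va_module_DV_action_minus_one: "YW (DV Y vac k u) (-1) w = YW u (- int k - 1) w"
  unfolding DV_def
  by (subst va_module_iterate, subst Sum_any_eq_single[of 0])
    (auto simp: va_module_vacuum_action)

lemma va_module_DV_action_nonneg:
  "YW (DV Y vac k u) (int j + int k) w = sW ((-1) ^ k * of_nat ((k + j) choose j)) (YW u (int j) w)"
proof -
  have "YW (DV Y vac k u) (int j + int k) w
      = sW (of_int ((-1) ^ j * int_binom (- int k - 1) j))
          (0 - sW ((-1) powi (- int k - 1)) (YW u (int j) w))"
    unfolding DV_def
    by (subst va_module_iterate, subst Sum_any_eq_single[of j])
      (auto simp: va_module_vacuum_action)
  also have "\<dots> = sW ((-1) ^ k * of_nat ((k + j) choose j)) (YW u (int j) w)"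
    by (simp add: int_binom_minus_Suc power_int_diff power_int_minus flip: power_inverse)
  finally show ?thesis .
qed

lemma vacuum_like_V_hom:
  assumes "vacuum_like YW w"
  shows "V_hom sV Y sW YW (\<lambda>v. YW v (-1) w)"
proof -
  have vanish: "YW u n w = 0" if "0 \<le> n" for u n
    using assms that by (simp add: vacuum_like_def)
  have "YW (Y u n v) (-1) w = YW u n (YW v (-1) w)" for u n v
    by (subst va_module_iterate, subst Sum_any_eq_single[of 0]) (auto simp: vanish)
  then show ?thesis
    using module by (simp add: V_hom_def va_module_def)
qed

end

context
  fixes sV :: "'k::field \<Rightarrow> 'v::ab_group_add \<Rightarrow> 'v" and Y :: "'v \<Rightarrow> int \<Rightarrow> 'v \<Rightarrow> 'v"
    and vac :: 'v and sW :: "'k \<Rightarrow> 'w::ab_group_add \<Rightarrow> 'w" and YW :: "'v \<Rightarrow> int \<Rightarrow> 'w \<Rightarrow> 'w"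
    and D :: "nat \<Rightarrow> 'w \<Rightarrow> 'w"
  assumes VB: "VB_module sV Y vac sW YW D"
begin

lemma VB_module_va_module: "va_module sV Y vac sW YW"
  using VB by (simp add: VB_module_def)

interpretation W: vector_space sW
  using VB_module_va_module by (simp add: va_module_def)

interpretation WW: vector_space_pair sW sW ..

lemma D_action_eq_DV_action_W_D:
  assumes w: "w \<in> W_D D"
  shows "D k (YW v n w) = YW (DV Y vac k v) n w"
proof -
  have linD: "Vector_Spaces.linear sW sW (D a)" and D0: "D 0 x = x" for a x
    using VB by (simp_all add: VB_module_def B_module_def)
  have "(\<Sum>a\<in>{..k} - {k}. D a (YW v n (sW ((-1) ^ (k - a)) (D (k - a) w)))) = 0"
  proof (intro sum.neutral ballI)
    fix a assume "a \<in> {..k} - {k}"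
    then have "D (k - a) w = 0" using w by (auto simp: W_D_def)
    then show "D a (YW v n (sW ((-1) ^ (k - a)) (D (k - a) w))) = 0"
      by (simp add: WW.linear_0[OF linD] va_module_action_0[OF VB_module_va_module])
  qed
  then have "(\<Sum>a\<le>k. D a (YW v n (sW ((-1) ^ (k - a)) (D (k - a) w)))) = D k (YW v n w)"
    by (simp add: sum.remove[of _ k] D0)
  then show ?thesis
    using VB by (simp add: VB_module_def)
qed

lemma W_D_vacuum_like:
  assumes w: "w \<in> W_D D"
  shows "vacuum_like YW w"
  unfolding vacuum_like_def
proof (intro allI impI)
  fix u and n :: int
  assume "0 \<le> n"
  then obtain j where n: "n = int j"
    using nonneg_int_cases by blast
  obtain N where N: "\<And>m. m \<ge> N \<Longrightarrow> YW u m w = 0"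
    using VB_module_va_module unfolding va_module_def by blast
  obtain q where "q \<ge> nat N" and binom: "(of_nat ((q + j) choose j) :: 'k) \<noteq> 0"
    using ex_ge_of_nat_choose_add_neq_0 by blast
  have linD: "Vector_Spaces.linear sW sW (D q)"
    using VB by (simp add: VB_module_def B_module_def)
  have "sW ((-1) ^ q * of_nat ((q + j) choose j)) (YW u (int j) w) = D q (YW u (int j + int q) w)"
    by (simp add: D_action_eq_DV_action_W_D[OF w] va_module_DV_action_nonneg[OF VB_module_va_module])
  also have "\<dots> = 0"
    using N[of "int j + int q"] \<open>q \<ge> nat N\<close> by (simp add: WW.linear_0[OF linD])
  finally show "YW u n w = 0"
    using binom by (simp add: n)
qed

lemma V_hom_B_hom_iff:
  assumes va: "vertex_algebra sV Y vac" and f: "V_hom sV Y sW YW f"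
  shows "B_hom Y vac D f \<longleftrightarrow> f vac \<in> W_D D"
proof
  assume "B_hom Y vac D f"
  then have "D n (f vac) = YW vac (- int n - 1) (f vac)" for n
    using f by (simp add: B_hom_def DV_def V_hom_def)
  then show "f vac \<in> W_D D"
    by (simp add: W_D_def va_module_vacuum_action[OF VB_module_va_module])
next
  assume w: "f vac \<in> W_D D"
  have "f (DV Y vac n v) = D n (f v)" for n v
  proof -
    have "f (DV Y vac n v) = YW v (- int n - 1) (f vac)"
      using f by (simp add: DV_def V_hom_def)
    also have "\<dots> = YW (DV Y vac n v) (-1) (f vac)"
      by (simp add: va_module_DV_action_minus_one[OF VB_module_va_module])
    also have "\<dots> = D n (YW v (-1) (f vac))"
      by (simp add: D_action_eq_DV_action_W_D[OF w])
    also have "\<dots> = D n (f v)"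
      by (simp flip: V_hom_eq_action_minus_one[OF va f])
    finally show ?thesis .
  qed
  then show "B_hom Y vac D f"
    by (simp add: B_hom_def)
qed

lemma VB_Hom_add:
  assumes f: "f \<in> VB_Hom sV Y vac sW YW D" and g: "g \<in> VB_Hom sV Y vac sW YW D"
  shows "(\<lambda>x. f x + g x) \<in> VB_Hom sV Y vac sW YW D"
proof -
  have lf: "Vector_Spaces.linear sV sW f" and lg: "Vector_Spaces.linear sV sW g"
    using f g by (simp_all add: VB_Hom_def V_hom_def)
  interpret VW: vector_space_pair sV sW
    using lf by (simp add: Vector_Spaces.linear_iff vector_space_pair_def)
  have linYW: "Vector_Spaces.linear sW sW (YW u n)" and linD: "Vector_Spaces.linear sW sW (D k)"
    for u n k
    using VB by (simp_all add: VB_module_def va_module_def B_module_def)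
  show ?thesis
    using f g VW.linear_compose_add[OF lf lg]
    by (simp add: VB_Hom_def V_hom_def B_hom_def WW.linear_add[OF linYW] WW.linear_add[OF linD])
qed

lemma VB_Hom_scale:
  assumes f: "f \<in> VB_Hom sV Y vac sW YW D"
  shows "(\<lambda>x. sW c (f x)) \<in> VB_Hom sV Y vac sW YW D"
proof -
  have lf: "Vector_Spaces.linear sV sW f"
    using f by (simp add: VB_Hom_def V_hom_def)
  interpret VW: vector_space_pair sV sW
    using lf by (simp add: Vector_Spaces.linear_iff vector_space_pair_def)
  have linYW: "Vector_Spaces.linear sW sW (YW u n)" and linD: "Vector_Spaces.linear sW sW (D k)"
    for u n k
    using VB by (simp_all add: VB_module_def va_module_def B_module_def)
  show ?thesis
    using f VW.linear_compose_scale_right[OF lf]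
    by (simp add: VB_Hom_def V_hom_def B_hom_def WW.linear_scale[OF linYW] WW.linear_scale[OF linD])
qed

lemma bij_betw_VB_Hom_W_D:
  assumes va: "vertex_algebra sV Y vac"
  shows "bij_betw (\<lambda>f. f vac) (VB_Hom sV Y vac sW YW D) (W_D D)"
proof (rule bij_betw_byWitness[where f' = "\<lambda>w v. YW v (-1) w"])
  have vac_minus_one: "YW vac (-1) w = w" for w
    by (simp add: va_module_vacuum_action[OF VB_module_va_module])
  show "\<forall>f\<in>VB_Hom sV Y vac sW YW D. (\<lambda>v. YW v (-1) (f vac)) = f"
    using V_hom_eq_action_minus_one[OF va, of sW YW] by (auto simp: VB_Hom_def)
  show "\<forall>w\<in>W_D D. YW vac (-1) w = w"
    by (simp add: vac_minus_one)
  show "(\<lambda>f. f vac) ` VB_Hom sV Y vac sW YW D \<subseteq> W_D D"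
    using V_hom_B_hom_iff[OF va] by (auto simp: VB_Hom_def)
  show "(\<lambda>w v. YW v (-1) w) ` W_D D \<subseteq> VB_Hom sV Y vac sW YW D"
  proof clarify
    fix w assume w: "w \<in> W_D D"
    have "V_hom sV Y sW YW (\<lambda>v. YW v (-1) w)"
      by (rule vacuum_like_V_hom[OF VB_module_va_module W_D_vacuum_like[OF w]])
    with w show "(\<lambda>v. YW v (-1) w) \<in> VB_Hom sV Y vac sW YW D"
      by (simp add: VB_Hom_def V_hom_B_hom_iff[OF va] vac_minus_one)
  qed
qed

end

theorem lemma2p6:
  fixes sV :: "'k::alg_closed_field \<Rightarrow> 'v::ab_group_add \<Rightarrow> 'v"
    and Y :: "'v \<Rightarrow> int \<Rightarrow> 'v \<Rightarrow> 'v"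
    and vac :: 'v
    and sW :: "'k \<Rightarrow> 'w::ab_group_add \<Rightarrow> 'w"
    and YW :: "'v \<Rightarrow> int \<Rightarrow> 'w \<Rightarrow> 'w"
    and D :: "nat \<Rightarrow> 'w \<Rightarrow> 'w"
  assumes "prime CHAR('k)" and "odd CHAR('k)"
    and "vertex_algebra sV Y vac"
    and "VB_module sV Y vac sW YW D"
  shows "(\<forall>f. V_hom sV Y sW YW f \<longrightarrow> (B_hom Y vac D f \<longleftrightarrow> f vac \<in> W_D D))
       \<and> bij_betw (\<lambda>f. f vac) (VB_Hom sV Y vac sW YW D) (W_D D)
       \<and> (\<forall>f\<in>VB_Hom sV Y vac sW YW D. \<forall>g\<in>VB_Hom sV Y vac sW YW D.
            (\<lambda>x. f x + g x) \<in> VB_Hom sV Y vac sW YW D \<and> (\<lambda>x. f x + g x) vac = f vac + g vac)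
       \<and> (\<forall>c. \<forall>f\<in>VB_Hom sV Y vac sW YW D.
            (\<lambda>x. sW c (f x)) \<in> VB_Hom sV Y vac sW YW D \<and> (\<lambda>x. sW c (f x)) vac = sW c (f vac))"
  using V_hom_B_hom_iff[OF assms(4,3)] bij_betw_VB_Hom_W_D[OF assms(4,3)]
    VB_Hom_add[OF assms(4)] VB_Hom_scale[OF assms(4)]
  by blast

end
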